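(* There is an absolute constant $c>0$ such that for every odd $n$, every mapping $\phi\colon\{0,1\}^n\to\{0,1\}^n$ from ${\sf XOR}$ to ${\sf Majority}$ satisfies ${\sf avgStretch}(\phi)\ge c\sqrt{n}$. On the other hand, there is an absolute constant $C$ such that for every odd $n$ there exists a $C$-Lipschitz mapping $\psi\colon\{0,1\}^n\to\{0,1\}^n$ from ${\sf Majority}$ to ${\sf XOR}$.
   Context: ${\sf XOR}(x)=\sum_i x_i \bmod 2$; ${\sf Majority}(x)=1$ iff $\sum_i x_i>n/2$. A mapping from $f$ to $g$ is a bijection $\psi$ of $\{0,1\}^n$ with $f(z)=g(\psi(z))$ for all $z$. ${\sf avgStretch}(\phi)=\mathbb{E}_{x,i}[{\sf dist}(\phi(x),\phi(x+e_i))]$ with $x$ uniform in $\{0,1\}^n$, $i$ uniform in $[n]$, $e_i$ the $i$-th unit vector, addition mod 2, ${\sf dist}$ Hamming distance. $C$-Lipschitz: ${\sf dist}(\psi(x),\psi(y))\le C\,{\sf dist}(x,y)$ for all $x,y$. *)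

theory Defs
  imports "HOL-Analysis.Analysis"
begin

text \<open>The Boolean cube {0,1}^n, points represented as bool lists of length n
  (True = 1).\<close>
definition cube :: "nat \<Rightarrow> bool list set" where
  "cube n = {x. length x = n}"

definition weight :: "bool list \<Rightarrow> nat" where
  "weight x = length (filter id x)"

definition XOR :: "bool list \<Rightarrow> bool" where
  "XOR x = odd (weight x)"

definition Majority :: "bool list \<Rightarrow> bool" where
  "Majority x = (2 * weight x > length x)"

definition hdist :: "bool list \<Rightarrow> bool list \<Rightarrow> nat" where
  "hdist x y = card {i. i < length x \<and> x ! i \<noteq> y ! i}"

definition flip :: "nat \<Rightarrow> bool list \<Rightarrow> bool list" where
  "flip i x = x[i := \<not> x ! i]"

definition is_mapping :: "nat \<Rightarrow> (bool list \<Rightarrow> bool) \<Rightarrow> (bool list \<Rightarrow> bool)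
    \<Rightarrow> (bool list \<Rightarrow> bool list) \<Rightarrow> bool" where
  "is_mapping n f g psi \<longleftrightarrow> bij_betw psi (cube n) (cube n) \<and>
     (\<forall>z \<in> cube n. f z = g (psi z))"

definition avgStretch :: "nat \<Rightarrow> (bool list \<Rightarrow> bool list) \<Rightarrow> real" where
  "avgStretch n phi = (\<Sum>x\<in>cube n. \<Sum>i<n. real (hdist (phi x) (phi (flip i x))))
      / (2 ^ n * real n)"

definition lipschitz_on_cube :: "nat \<Rightarrow> real \<Rightarrow> (bool list \<Rightarrow> bool list) \<Rightarrow> bool" where
  "lipschitz_on_cube n C psi \<longleftrightarrow>
     (\<forall>x\<in>cube n. \<forall>y\<in>cube n. real (hdist (psi x) (psi y)) \<le> C * real (hdist x y))"

end

theory Submission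
  imports Defs
begin

text \<open>Flipping one input bit changes XOR, so a mapping \<open>\<phi>\<close> from XOR to Majority must move the
  image across the majority threshold along every edge; each of the \<open>n\<close> edges at \<open>x\<close> is therefore
  stretched by at least \<open>|bias (\<phi> x)|/2\<close>, where \<open>bias y = 2 weight y - n\<close>. As \<open>\<phi>\<close> is a bijection
  the average stretch is at least \<open>E|bias|/2\<close> over the uniform cube, and the moments
  \<open>E bias\<^sup>2 = n\<close>, \<open>E bias\<^sup>4 = 3n\<^sup>2 - 2n\<close> force \<open>E|bias| \<ge> \<surd>n/8\<close> (average
  \<open>y\<^sup>2 \<le> t|y| + y\<^sup>4/t\<^sup>2\<close> with \<open>t = 2\<surd>n\<close>).

  Conversely, send \<open>z\<close> to its adjacent differences \<open>z\<^sub>i + z\<^sub>i\<^sub>+\<^sub>1\<close> (\<open>i < n - 1\<close>) followed by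
  \<open>Maj z + z\<^sub>0 + z\<^sub>n\<^sub>-\<^sub>1\<close>. The parity of the image telescopes to \<open>Maj z\<close>; the differences
  determine \<open>z\<close> up to complementation, which for odd \<open>n\<close> flips Majority; and flipping one
  input bit changes at most two differences and the last bit.\<close>

lemma finite_cube [simp]: "finite (cube n)"
  using finite_lists_length_eq[of "UNIV :: bool set" n] by (simp add: cube_def)

lemma card_cube: "card (cube n) = 2 ^ n"
  using card_lists_length_eq[of "UNIV :: bool set" n] by (simp add: cube_def)

lemma cube_Suc: "cube (Suc n) = Cons True ` cube n \<union> Cons False ` cube n"
  by (auto simp: cube_def length_Suc_conv image_iff)

lemma sum_cube_Suc: "(\<Sum>x\<in>cube (Suc n). f x) = (\<Sum>x\<in>cube n. f (True # x) + f (False # x))"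
proof -
  have "(\<Sum>x\<in>cube (Suc n). f x) = sum f (Cons True ` cube n) + sum f (Cons False ` cube n)"
    unfolding cube_Suc by (rule sum.union_disjoint) auto
  then show ?thesis
    by (simp add: sum.reindex sum.distrib)
qed

lemma flip_in_cube: "x \<in> cube n \<Longrightarrow> flip i x \<in> cube n"
  by (simp add: cube_def flip_def)

lemma XOR_flip: "i < length x \<Longrightarrow> XOR (flip i x) = (\<not> XOR x)"
proof (induction x arbitrary: i)
  case (Cons a x)
  then show ?case
    by (cases i) (auto simp: flip_def XOR_def weight_def)
qed simp

lemma hdist_eq_weight: "length x = length y \<Longrightarrow> hdist x y = weight (map2 (\<noteq>) x y)"
  unfolding hdist_def weight_def length_filter_conv_card
  by (auto intro!: arg_cong[where f = card])

lemma hdist_Cons: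
  "length x = length y \<Longrightarrow> hdist (a # x) (b # y) = hdist x y + (if a \<noteq> b then 1 else 0)"
  by (simp add: hdist_eq_weight weight_def)

lemma hdist_snoc_le: "length x = length y \<Longrightarrow> hdist (x @ [a]) (y @ [b]) \<le> hdist x y + 1"
  by (simp add: hdist_eq_weight weight_def)

lemma hdist_ge_1: "length x = length y \<Longrightarrow> x \<noteq> y \<Longrightarrow> 1 \<le> hdist x y"
  by (auto simp: hdist_def Suc_le_eq card_gt_0_iff intro: nth_equalityI)

lemma weight_diff_le_hdist:
  "length x = length y \<Longrightarrow> \<bar>real (weight x) - real (weight y)\<bar> \<le> real (hdist x y)"
  by (induction x y rule: list_induct2) (auto simp: hdist_Cons weight_def)

definition bias :: "bool list \<Rightarrow> real" where
  "bias x = 2 * real (weight x) - real (length x)"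

lemma bias_Cons: "bias (True # x) = bias x + 1" "bias (False # x) = bias x - 1"
  by (simp_all add: bias_def weight_def)

lemma Majority_iff_bias_pos: "Majority x \<longleftrightarrow> bias x > 0"
  unfolding Majority_def bias_def by linarith

lemma sum_bias_power2: "(\<Sum>x\<in>cube n. bias x ^ 2) = real n * 2 ^ n"
proof (induction n)
  case (Suc n)
  have "(\<Sum>x\<in>cube (Suc n). bias x ^ 2) = (\<Sum>x\<in>cube n. 2 * bias x ^ 2 + 2)"
    by (simp add: sum_cube_Suc bias_Cons power2_eq_square algebra_simps)
  also have "\<dots> = 2 * (\<Sum>x\<in>cube n. bias x ^ 2) + 2 * 2 ^ n"
    by (simp add: sum.distrib sum_distrib_left card_cube)
  finally show ?case
    by (simp add: Suc.IH algebra_simps)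
qed (simp add: cube_def bias_def weight_def)

lemma sum_bias_power4: "(\<Sum>x\<in>cube n. bias x ^ 4) = (3 * real n ^ 2 - 2 * real n) * 2 ^ n"
proof (induction n)
  case (Suc n)
  have "(\<Sum>x\<in>cube (Suc n). bias x ^ 4) = (\<Sum>x\<in>cube n. 2 * bias x ^ 4 + 12 * bias x ^ 2 + 2)"
    by (simp add: sum_cube_Suc bias_Cons power2_eq_square power4_eq_xxxx algebra_simps)
  also have "\<dots> = 2 * (\<Sum>x\<in>cube n. bias x ^ 4) + 12 * (\<Sum>x\<in>cube n. bias x ^ 2) + 2 * 2 ^ n"
    by (simp add: sum.distrib sum_distrib_left card_cube)
  also have "\<dots> = (3 * real (Suc n) ^ 2 - 2 * real (Suc n)) * 2 ^ Suc n"
    unfolding Suc.IH sum_bias_power2 by (simp add: power2_eq_square algebra_simps)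
  finally show ?case .
qed (simp add: cube_def bias_def weight_def)

lemma power2_le_abs_plus_power4:
  fixes y t :: real
  assumes "t > 0"
  shows "y ^ 2 \<le> t * \<bar>y\<bar> + y ^ 4 / t ^ 2"
proof (cases "\<bar>y\<bar> \<le> t")
  case True
  then have "y ^ 2 \<le> t * \<bar>y\<bar>"
    by (metis abs_ge_zero mult_right_mono power2_abs power2_eq_square)
  then show ?thesis
    by (simp add: add_increasing2)
next
  case False
  then have "t ^ 2 \<le> y ^ 2"
    using assms by (simp add: abs_le_square_iff[symmetric])
  then have "t ^ 2 * y ^ 2 \<le> y ^ 4"
    by (metis mult_right_mono zero_le_power2 power2_eq_square power4_eq_xxxx mult.assoc)
  then have "y ^ 2 \<le> y ^ 4 / t ^ 2"
    using assms by (simp add: pos_le_divide_eq mult.commute)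
  then show ?thesis
    using assms by (simp add: add_increasing)
qed

lemma sum_abs_bias_ge: "sqrt (real n) * 2 ^ n / 8 \<le> (\<Sum>x\<in>cube n. \<bar>bias x\<bar>)"
proof (cases "n = 0")
  case False
  define S where "S = (\<Sum>x\<in>cube n. \<bar>bias x\<bar>)"
  define t where "t = 2 * sqrt (real n)"
  have t: "t > 0" "t ^ 2 = 4 * real n"
    using False by (simp_all add: t_def power_mult_distrib)
  have "real n * 2 ^ n = (\<Sum>x\<in>cube n. bias x ^ 2)"
    by (simp add: sum_bias_power2)
  also have "\<dots> \<le> (\<Sum>x\<in>cube n. t * \<bar>bias x\<bar> + bias x ^ 4 / t ^ 2)"
    by (intro sum_mono power2_le_abs_plus_power4 t)
  also have "\<dots> = t * S + (3 * real n - 2) * 2 ^ n / 4"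
    using False by (simp add: S_def sum.distrib sum_distrib_left sum_bias_power4 t
        flip: sum_divide_distrib) (simp add: power2_eq_square field_simps)
  also have "\<dots> \<le> t * S + 3 / 4 * (real n * 2 ^ n)"
    by simp
  finally have "real n * 2 ^ n / 4 \<le> t * S"
    by linarith
  then have "sqrt (real n) * (sqrt (real n) * 2 ^ n / 8) \<le> sqrt (real n) * S"
    by (simp add: t_def mult.assoc[symmetric])
  then have "sqrt (real n) * 2 ^ n / 8 \<le> S"
    by (rule mult_left_le_imp_le) (use False in simp)
  then show ?thesis
    by (simp add: S_def)
qed simp

lemma abs_bias_le_hdist:
  assumes "length x = length y" "Majority x \<noteq> Majority y"
  shows "\<bar>bias x\<bar> \<le> 2 * real (hdist x y)"
proof -
  have "\<bar>bias x\<bar> \<le> \<bar>bias x - bias y\<bar>"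
    using assms(2) unfolding Majority_iff_bias_pos by linarith
  also have "\<dots> = \<bar>2 * (real (weight x) - real (weight y))\<bar>"
    using assms(1) by (simp add: bias_def algebra_simps)
  also have "\<dots> = 2 * \<bar>real (weight x) - real (weight y)\<bar>"
    by (simp only: abs_mult abs_numeral)
  also have "\<dots> \<le> 2 * real (hdist x y)"
    using weight_diff_le_hdist[OF assms(1)] by simp
  finally show ?thesis .
qed

lemma abs_bias_le_stretch:
  assumes "is_mapping n XOR Majority \<phi>" "x \<in> cube n" "i < n"
  shows "\<bar>bias (\<phi> x)\<bar> \<le> 2 * real (hdist (\<phi> x) (\<phi> (flip i x)))"
proof (rule abs_bias_le_hdist)
  have "XOR (flip i x) \<noteq> XOR x"
    using assms(2,3) by (simp add: XOR_flip cube_def)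
  then show "Majority (\<phi> x) \<noteq> Majority (\<phi> (flip i x))"
    using assms(1,2) flip_in_cube by (auto simp: is_mapping_def)
  show "length (\<phi> x) = length (\<phi> (flip i x))"
    using assms(1,2) flip_in_cube bij_betwE by (fastforce simp: is_mapping_def cube_def)
qed

lemma avgStretch_XOR_to_Majority_ge:
  assumes "is_mapping n XOR Majority \<phi>"
  shows "sqrt (real n) / 16 \<le> avgStretch n \<phi>"
proof (cases "n = 0")
  case False
  have bij: "bij_betw \<phi> (cube n) (cube n)"
    using assms by (simp add: is_mapping_def)
  have "real n / 2 * (sqrt (real n) * 2 ^ n / 8) \<le> real n / 2 * (\<Sum>y\<in>cube n. \<bar>bias y\<bar>)"
    by (intro mult_left_mono sum_abs_bias_ge) simp
  also have "\<dots> = real n / 2 * (\<Sum>x\<in>cube n. \<bar>bias (\<phi> x)\<bar>)"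
    using sum.reindex_bij_betw[OF bij, of "\<lambda>y. \<bar>bias y\<bar>"] by simp
  also have "\<dots> = (\<Sum>x\<in>cube n. \<Sum>i<n. \<bar>bias (\<phi> x)\<bar> / 2)"
    by (simp add: sum_distrib_left)
  also have "\<dots> \<le> (\<Sum>x\<in>cube n. \<Sum>i<n. real (hdist (\<phi> x) (\<phi> (flip i x))))"
    using abs_bias_le_stretch[OF assms] by (intro sum_mono) fastforce
  finally show ?thesis
    using False by (simp add: avgStretch_def field_simps)
qed (simp add: avgStretch_def)

definition adjacent_xors :: "nat \<Rightarrow> bool list \<Rightarrow> bool list" where
  "adjacent_xors k z = map (\<lambda>i. z ! i \<noteq> z ! Suc i) [0..<k]"

definition maj_to_xor :: "nat \<Rightarrow> bool list \<Rightarrow> bool list" where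
  "maj_to_xor n z = adjacent_xors (n - 1) z @ [Majority z \<noteq> (z ! 0 \<noteq> z ! (n - 1))]"

lemma XOR_snoc: "XOR (x @ [b]) = (XOR x \<noteq> b)"
  by (simp add: XOR_def weight_def)

lemma XOR_adjacent_xors: "XOR (adjacent_xors k z) = (z ! 0 \<noteq> z ! k)"
  by (induction k) (auto simp: adjacent_xors_def XOR_snoc, simp add: XOR_def weight_def)

lemma XOR_maj_to_xor: "XOR (maj_to_xor n z) = Majority z"
  by (auto simp: maj_to_xor_def XOR_snoc XOR_adjacent_xors)

lemma length_maj_to_xor: "n > 0 \<Longrightarrow> length (maj_to_xor n z) = n"
  by (simp add: maj_to_xor_def adjacent_xors_def)

lemma Majority_map_Not: "odd (length x) \<Longrightarrow> Majority (map Not x) = (\<not> Majority x)"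
  using sum_length_filter_compl[of id x] by (auto simp: Majority_def weight_def comp_def elim!: oddE) arith

lemma adjacent_xors_eq_imp:
  assumes "adjacent_xors (n - 1) x = adjacent_xors (n - 1) y" "length x = n" "length y = n"
  shows "y = x \<or> y = map Not x"
proof -
  have "(x ! i = y ! i) = (x ! 0 = y ! 0)" if "i < n" for i
    using that
  proof (induction i)
    case (Suc i)
    then have "i < n - 1"
      by simp
    then have "(x ! i \<noteq> x ! Suc i) = (y ! i \<noteq> y ! Suc i)"
      using arg_cong[OF assms(1), of "\<lambda>l. l ! i"] by (simp add: adjacent_xors_def)
    then show ?case
      using Suc by auto
  qed simp
  then show ?thesis
    using assms(2,3) by (cases "x ! 0 = y ! 0") (auto intro!: nth_equalityI)
qed

lemma inj_on_maj_to_xor: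
  assumes "odd n"
  shows "inj_on (maj_to_xor n) (cube n)"
proof
  fix x y
  assume x: "x \<in> cube n" and "y \<in> cube n" and eq: "maj_to_xor n x = maj_to_xor n y"
  then have "y = x \<or> y = map Not x"
    by (intro adjacent_xors_eq_imp) (auto simp: maj_to_xor_def adjacent_xors_def cube_def)
  moreover have "y \<noteq> map Not x"
  proof
    assume "y = map Not x"
    moreover have "n - 1 < n" "0 < n"
      using odd_pos[OF assms] by auto
    ultimately show False
      using eq x assms by (auto simp: maj_to_xor_def cube_def Majority_map_Not)
  qed
  ultimately show "x = y"
    by simp
qed

lemma bij_betw_maj_to_xor:
  assumes "odd n"
  shows "bij_betw (maj_to_xor n) (cube n) (cube n)"
proof -
  have "maj_to_xor n ` cube n \<subseteq> cube n"
    using odd_pos[OF assms] by (auto simp: cube_def length_maj_to_xor)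
  then show ?thesis
    using inj_on_maj_to_xor[OF assms] by (simp add: bij_betw_def endo_inj_surj)
qed

lemma hdist_adjacent_xors_le:
  assumes "length x = length y" "k < length x"
  shows "hdist (adjacent_xors k x) (adjacent_xors k y) \<le> 2 * hdist x y"
proof -
  define D where "D = {i. i < length x \<and> x ! i \<noteq> y ! i}"
  have "finite D"
    by (simp add: D_def)
  have "hdist (adjacent_xors k x) (adjacent_xors k y)
      = card {i. i < k \<and> (x ! i \<noteq> x ! Suc i) \<noteq> (y ! i \<noteq> y ! Suc i)}"
    by (auto simp: hdist_def adjacent_xors_def intro!: arg_cong[where f = card])
  also have "\<dots> \<le> card (D \<union> Suc -` D)"
    using assms(2) \<open>finite D\<close> by (intro card_mono finite_UnI finite_vimageI) (auto simp: D_def)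
  also have "\<dots> \<le> card D + card D"
    using card_vimage_inj_on_le[of Suc UNIV D] \<open>finite D\<close> by (intro card_Un_le[THEN order_trans] add_left_mono) simp_all
  finally show ?thesis
    by (simp add: hdist_def D_def)
qed

lemma hdist_maj_to_xor_le:
  assumes "x \<in> cube n" "y \<in> cube n"
  shows "hdist (maj_to_xor n x) (maj_to_xor n y) \<le> 3 * hdist x y"
proof (cases "x = y")
  case False
  have len: "length x = n" "length y = n"
    using assms by (simp_all add: cube_def)
  then have "n > 0"
    using False by auto
  have "hdist (maj_to_xor n x) (maj_to_xor n y)
      \<le> hdist (adjacent_xors (n - 1) x) (adjacent_xors (n - 1) y) + 1"
    unfolding maj_to_xor_def by (rule hdist_snoc_le) (simp add: adjacent_xors_def)
  also have "\<dots> \<le> 2 * hdist x y + hdist x y"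
    using len \<open>n > 0\<close> False by (intro add_mono hdist_adjacent_xors_le hdist_ge_1) auto
  finally show ?thesis
    by simp
qed (simp add: hdist_def)

lemma is_mapping_maj_to_xor: "odd n \<Longrightarrow> is_mapping n Majority XOR (maj_to_xor n)"
  by (simp add: is_mapping_def bij_betw_maj_to_xor XOR_maj_to_xor)

lemma lipschitz_maj_to_xor: "lipschitz_on_cube n 3 (maj_to_xor n)"
  unfolding lipschitz_on_cube_def
proof (intro ballI)
  fix x y
  assume "x \<in> cube n" "y \<in> cube n"
  then have "hdist (maj_to_xor n x) (maj_to_xor n y) \<le> 3 * hdist x y"
    by (rule hdist_maj_to_xor_le)
  then show "real (hdist (maj_to_xor n x) (maj_to_xor n y)) \<le> 3 * real (hdist x y)"
    by linarith
qed

theorem theorem3: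
  shows "(\<exists>c::real. c > 0 \<and> (\<forall>n phi. odd n \<longrightarrow> is_mapping n XOR Majority phi \<longrightarrow>
            avgStretch n phi \<ge> c * sqrt (real n)))
       \<and> (\<exists>C::real. \<forall>n. odd n \<longrightarrow> (\<exists>psi. is_mapping n Majority XOR psi \<and>
            lipschitz_on_cube n C psi))"
proof
  show "\<exists>c::real. c > 0 \<and> (\<forall>n phi. odd n \<longrightarrow> is_mapping n XOR Majority phi \<longrightarrow>
      avgStretch n phi \<ge> c * sqrt (real n))"
  proof (intro exI[of _ "1 / 16"] conjI allI impI)
    fix n phi
    assume "odd n" and "is_mapping n XOR Majority phi"
    then show "avgStretch n phi \<ge> 1 / 16 * sqrt (real n)"
      using avgStretch_XOR_to_Majority_ge by simp
  qed simp
  show "\<exists>C::real. \<forall>n. odd n \<longrightarrow> (\<exists>psi. is_mapping n Majority XOR psi \<and>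
      lipschitz_on_cube n C psi)"
  proof (intro exI[of _ 3] allI impI)
    fix n :: nat
    assume "odd n"
    then show "\<exists>psi. is_mapping n Majority XOR psi \<and> lipschitz_on_cube n 3 psi"
      by (intro exI[of _ "maj_to_xor n"] conjI is_mapping_maj_to_xor lipschitz_maj_to_xor)
  qed
qed

end
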